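(* Let $M$ be a Hausdorff space with continuous semiflow $(t,\omega)\mapsto t\omega$, $Z$ a Banach space, $A:D(A)\subset Z\to Z$ a closed linear operator, and $B,L:M\to L(Z,Z)$ each satisfying: $(\omega,z)\mapsto B(\omega)z$ (resp. $L(\omega)z$) is continuous, $\sup_{t\ge0}|B(t\omega)|<\infty$ (resp. $\sup_{t\ge0}|L(t\omega)|<\infty$) for every $\omega$, and these suprema are locally bounded in $\omega$. Let $\mathcal{C}(\omega)=AB(\omega)+L(\omega)$ and consider $\dot z(t)=\mathcal{C}(t\omega)z(t)$ (L) and, for $g\in C(\mathbb{R},Z)$, $\dot z(t)=\mathcal{C}(t\omega)z(t)+g(t)$ (G). (1) If (L) generates a $C_0$ linear cocycle $T_0$, then every mild solution $z\in C([0,a],Z)$ of (G) satisfies $z(t)=T_0(t,\omega)z(0)+\int_0^tT_0(t-s,s\omega)g(s)\,ds$ for $t\in[0,a]$. (2) If (L) generates a $C_0$ cocycle correspondence $\{H_1(t,\omega)\sim(T_1(t,\omega),S_1(-t,t\omega))\}$ with spectral projections $P_\omega$, $P^c_\omega$, then every mild solution $z\in C([0,a],Z)$ of (G) satisfies, with $x(t)=P_{t\omega}z(t)$, $y(t)=P^c_{t\omega}z(t)$: $x(t)=T_1(t,\omega)x(0)+\int_0^tT_1(t-s,s\omega)P_{s\omega}g(s)\,ds$ and $y(t)=S_1(t-a,a\omega)y(a)-\int_t^aS_1(t-s,s\omega)P^c_{s\omega}g(s)\,ds$ for $t\in[0,a]$.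
   Context: A mild solution of (G) on $[a_0,b]$ is $u\in C([a_0,b],Z)$ with $\int_{a_0}^tB(s\omega)u(s)ds\in D(A)$ and $u(t)=u(a_0)+A\int_{a_0}^tB(s\omega)u(s)ds+\int_{a_0}^t(L(s\omega)u(s)+g(s))ds$ for $t\in[a_0,b]$; for (L) take $g=0$. (L) generates a $C_0$ linear cocycle $T_0$ if $T_0(t,\omega)\in L(Z,Z)$, $T_0(0,\omega)=\mathrm{id}$, $T_0(t+s,\omega)=T_0(t,s\omega)T_0(s,\omega)$, $(t,\omega,x)\mapsto T_0(t,\omega)x$ continuous, and for every $x\in Z$ the function $z(t)=T_0(t,\omega)x$, $t\ge0$, is the unique mild solution of (L) with $z(0)=x$. (L) generates a $C_0$ cocycle correspondence if: $Z=X_\omega\oplus Y_\omega$ with projections $P_\omega$ (onto $X_\omega$), $P^c_\omega=I-P_\omega$, $(\omega,z)\mapsto P_\omega z$ continuous; $T_1(t,\omega)\in L(X_\omega,X_{t\omega})$ is a strongly continuous linear cocycle; $S_1(-t,t\omega)\in L(Y_{t\omega},Y_\omega)$ ($t\ge0$; indexed by $(t,\omega)$, with $S_1(t-s,s\omega)$ for $t\le s$ denoting $S_1(-(s-t),(s-t)(t\omega)):Y_{s\omega}\to Y_{t\omega}$), $S_1(0,\omega)=\mathrm{id}$, $S_1(-(t+s),(t+s)\omega)=S_1(-s,s\omega)S_1(-t,t(s\omega))$, strongly continuous; and for $t_1\le t_2$, $x_1\in X_{t_1\omega}$, $y_2\in Y_{t_2\omega}$, $z(t)=T_1(t-t_1,t_1\omega)x_1+S_1(t-t_2,t_2\omega)y_2$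 ($t_1\le t\le t_2$) is the unique mild solution of (L) on $[t_1,t_2]$ with $P_{t_1\omega}z(t_1)=x_1$, $P^c_{t_2\omega}z(t_2)=y_2$. *)

theory Defs
  imports "HOL-Analysis.Analysis"
begin

text \<open>Continuous semiflow on M: phi t w stands for t w (only t \<ge> 0 is relevant).\<close>
definition semiflow :: "(real \<Rightarrow> 'm::topological_space \<Rightarrow> 'm) \<Rightarrow> bool" where
  "semiflow phi \<longleftrightarrow>
     continuous_on ({0..} \<times> UNIV) (\<lambda>(t, w). phi t w) \<and>
     (\<forall>w. phi 0 w = w) \<and>
     (\<forall>t s w. t \<ge> 0 \<longrightarrow> s \<ge> 0 \<longrightarrow> phi (t + s) w = phi t (phi s w))"

definition closed_linear_operator :: "'z::banach set \<Rightarrow> ('z \<Rightarrow> 'z) \<Rightarrow> bool" where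
  "closed_linear_operator D A \<longleftrightarrow>
     subspace D \<and>
     (\<forall>x\<in>D. \<forall>y\<in>D. A (x + y) = A x + A y) \<and>
     (\<forall>c. \<forall>x\<in>D. A (c *\<^sub>R x) = c *\<^sub>R A x) \<and>
     closed {(x, A x) | x. x \<in> D}"

definition admissible_coeff ::
  "(real \<Rightarrow> 'm::topological_space \<Rightarrow> 'm) \<Rightarrow> ('m \<Rightarrow> ('z::banach \<Rightarrow>\<^sub>L 'z)) \<Rightarrow> bool" where
  "admissible_coeff phi B \<longleftrightarrow>
     continuous_on UNIV (\<lambda>(w, z). blinfun_apply (B w) z) \<and>
     (\<forall>w. bdd_above ((\<lambda>t. norm (B (phi t w))) ` {0..})) \<and>
     (\<forall>w. \<exists>U C. open U \<and> w \<in> U \<and>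
          (\<forall>w'\<in>U. \<forall>t\<ge>0. norm (B (phi t w')) \<le> C))"

definition mild_sol ::
  "(real \<Rightarrow> 'm \<Rightarrow> 'm) \<Rightarrow> 'z::banach set \<Rightarrow> ('z \<Rightarrow> 'z) \<Rightarrow> ('m \<Rightarrow> ('z \<Rightarrow>\<^sub>L 'z)) \<Rightarrow>
   ('m \<Rightarrow> ('z \<Rightarrow>\<^sub>L 'z)) \<Rightarrow> (real \<Rightarrow> 'z) \<Rightarrow> 'm \<Rightarrow> real \<Rightarrow> real \<Rightarrow> (real \<Rightarrow> 'z) \<Rightarrow> bool" where
  "mild_sol phi D A B L g w a0 b u \<longleftrightarrow>
     continuous_on {a0..b} u \<and>
     (\<forall>t\<in>{a0..b}.
        integral {a0..t} (\<lambda>s. B (phi s w) (u s)) \<in> D \<and>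
        u t = u a0 + A (integral {a0..t} (\<lambda>s. B (phi s w) (u s)))
              + integral {a0..t} (\<lambda>s. L (phi s w) (u s) + g s))"

definition C0_linear_cocycle ::
  "(real \<Rightarrow> 'm::topological_space \<Rightarrow> 'm) \<Rightarrow> 'z::banach set \<Rightarrow> ('z \<Rightarrow> 'z) \<Rightarrow> ('m \<Rightarrow> ('z \<Rightarrow>\<^sub>L 'z)) \<Rightarrow>
   ('m \<Rightarrow> ('z \<Rightarrow>\<^sub>L 'z)) \<Rightarrow> (real \<Rightarrow> 'm \<Rightarrow> ('z \<Rightarrow>\<^sub>L 'z)) \<Rightarrow> bool" where
  "C0_linear_cocycle phi D A B L T0 \<longleftrightarrow>
     (\<forall>w. T0 0 w = id_blinfun) \<and>
     (\<forall>t s w. t \<ge> 0 \<longrightarrow> s \<ge> 0 \<longrightarrow> T0 (t + s) w = T0 t (phi s w) o\<^sub>L T0 s w) \<and>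
     continuous_on ({0..} \<times> UNIV \<times> UNIV) (\<lambda>(t, w, x). blinfun_apply (T0 t w) x) \<and>
     (\<forall>w x b. b \<ge> 0 \<longrightarrow>
        mild_sol phi D A B L (\<lambda>_. 0) w 0 b (\<lambda>t. T0 t w x) \<and>
        (\<forall>u. mild_sol phi D A B L (\<lambda>_. 0) w 0 b u \<and> u 0 = x \<longrightarrow>
             (\<forall>t\<in>{0..b}. u t = T0 t w x)))"

text \<open>Sb t w stands for S1(-t, t w) : Y_(t w) \<rightarrow> Y_w (indexed by (t,w)).\<close>
definition C0_cocycle_correspondence ::
  "(real \<Rightarrow> 'm::topological_space \<Rightarrow> 'm) \<Rightarrow> 'z::banach set \<Rightarrow> ('z \<Rightarrow> 'z) \<Rightarrow> ('m \<Rightarrow> ('z \<Rightarrow>\<^sub>L 'z)) \<Rightarrow>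
   ('m \<Rightarrow> ('z \<Rightarrow>\<^sub>L 'z)) \<Rightarrow> ('m \<Rightarrow> ('z \<Rightarrow>\<^sub>L 'z)) \<Rightarrow>
   (real \<Rightarrow> 'm \<Rightarrow> 'z \<Rightarrow> 'z) \<Rightarrow> (real \<Rightarrow> 'm \<Rightarrow> 'z \<Rightarrow> 'z) \<Rightarrow> bool" where
  "C0_cocycle_correspondence phi D A B L P T1 Sb \<longleftrightarrow>
     (let X = (\<lambda>w. range (blinfun_apply (P w)));
          Y = (\<lambda>w. range (\<lambda>z. z - P w z)) in
     (\<forall>w. P w o\<^sub>L P w = P w) \<and>
     continuous_on UNIV (\<lambda>(w, z). blinfun_apply (P w) z) \<and>
     \<comment> \<open>T1: strongly continuous linear cocycle on the bundle X\<close>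
     (\<forall>t w. t \<ge> 0 \<longrightarrow>
        (\<forall>x\<in>X w. T1 t w x \<in> X (phi t w)) \<and>
        (\<forall>x\<in>X w. \<forall>y\<in>X w. \<forall>a c. T1 t w (a *\<^sub>R x + c *\<^sub>R y) = a *\<^sub>R T1 t w x + c *\<^sub>R T1 t w y) \<and>
        (\<exists>C. \<forall>x\<in>X w. norm (T1 t w x) \<le> C * norm x)) \<and>
     (\<forall>w. \<forall>x\<in>X w. T1 0 w x = x) \<and>
     (\<forall>t s w. t \<ge> 0 \<longrightarrow> s \<ge> 0 \<longrightarrow> (\<forall>x\<in>X w. T1 (t + s) w x = T1 t (phi s w) (T1 s w x))) \<and>
     continuous_on {(t, w, x). t \<ge> 0 \<and> x \<in> X w} (\<lambda>(t, w, x). T1 t w x) \<and>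
     \<comment> \<open>Sb t w = S1(-t, t w): backward cocycle on the bundle Y\<close>
     (\<forall>t w. t \<ge> 0 \<longrightarrow>
        (\<forall>y\<in>Y (phi t w). Sb t w y \<in> Y w) \<and>
        (\<forall>x\<in>Y (phi t w). \<forall>y\<in>Y (phi t w). \<forall>a c. Sb t w (a *\<^sub>R x + c *\<^sub>R y) = a *\<^sub>R Sb t w x + c *\<^sub>R Sb t w y) \<and>
        (\<exists>C. \<forall>y\<in>Y (phi t w). norm (Sb t w y) \<le> C * norm y)) \<and>
     (\<forall>w. \<forall>y\<in>Y w. Sb 0 w y = y) \<and>
     (\<forall>t s w. t \<ge> 0 \<longrightarrow> s \<ge> 0 \<longrightarrow>
        (\<forall>y\<in>Y (phi (t + s) w). Sb (t + s) w y = Sb s w (Sb t (phi s w) y))) \<and>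
     continuous_on {(t, w, y). t \<ge> 0 \<and> y \<in> Y (phi t w)} (\<lambda>(t, w, y). Sb t w y) \<and>
     \<comment> \<open>boundary value problem\<close>
     (\<forall>w t1 t2 x1 y2. 0 \<le> t1 \<longrightarrow> t1 \<le> t2 \<longrightarrow> x1 \<in> X (phi t1 w) \<longrightarrow> y2 \<in> Y (phi t2 w) \<longrightarrow>
        (let zz = (\<lambda>t. T1 (t - t1) (phi t1 w) x1 + Sb (t2 - t) (phi t w) y2) in
          mild_sol phi D A B L (\<lambda>_. 0) w t1 t2 zz \<and>
          P (phi t1 w) (zz t1) = x1 \<and> zz t2 - P (phi t2 w) (zz t2) = y2 \<and>
          (\<forall>u. mild_sol phi D A B L (\<lambda>_. 0) w t1 t2 u \<and>
               P (phi t1 w) (u t1) = x1 \<and> u t2 - P (phi t2 w) (u t2) = y2 \<longrightarrow>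
               (\<forall>t\<in>{t1..t2}. u t = zz t)))))"

end

theory Submission
  imports Defs
begin

text \<open>Variation of constants by superposition of homogeneous solutions. For (1), the function
  \<open>s \<mapsto> T0(s - r, r\<omega>) g(r)\<close> is, for each \<open>r\<close>, the mild solution of (L) on \<open>[r, a]\<close>
  starting at \<open>g(r)\<close>. Integrating these solutions over \<open>r \<in> [0, t]\<close> gives a mild solution of (G)
  that vanishes at 0: Dirichlet's formula exchanges the iterated integrals over the triangle
  \<open>0 \<le> r \<le> s \<le> t\<close>, and the closed operator \<open>A\<close> commutes with the outer integral. So \<open>z\<close> minus
  this integral solves (L) with initial value \<open>z(0)\<close>, and uniqueness identifies it with
  \<open>T0(t, \<omega>) z(0)\<close>.

  For (2) the forcing is split as \<open>P g + P\<^sup>c g\<close>. The \<open>X\<close>-part is integrated forward from 0 with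
  \<open>T1\<close>, the \<open>Y\<close>-part backward from \<open>a\<close> with \<open>S1\<close>. The remainder solves (L), so it is the
  solution of the boundary value problem with data \<open>P z(0)\<close> and \<open>P\<^sup>c z(a)\<close>: the forward integral
  vanishes at 0 and lies in \<open>X\<close>, the backward one vanishes at \<open>a\<close> and lies in \<open>Y\<close>.\<close>

section \<open>Parametric integrals and Dirichlet's formula\<close>

lemma integral_rescale_unit_interval:
  fixes f :: "real \<Rightarrow> 'a::banach"
  assumes "a \<le> b"
  shows "integral {a..b} f = (b - a) *\<^sub>R integral {0..1} (\<lambda>\<theta>. f (a + (b - a) * \<theta>))"
proof (cases "a = b")
  case False
  then have m: "b - a > 0" using assms by simp
  have unit: "cbox ((a - a) /\<^sub>R (b - a)) ((b - a) /\<^sub>R (b - a)) = {0..1::real}"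
    using m by simp
  have iff: "((\<lambda>\<theta>. f (a + (b - a) * \<theta>)) has_integral I /\<^sub>R (b - a)) {0..1} \<longleftrightarrow> (f has_integral I) {a..b}"
    for I :: 'a
    using has_integral_affinity_iff[OF m, where f=f and I=I and c=a and a=a and b=b]
    unfolding unit by (simp add: add.commute)
  show ?thesis
  proof (cases "f integrable_on {a..b}")
    case True
    then have "((\<lambda>\<theta>. f (a + (b - a) * \<theta>)) has_integral integral {a..b} f /\<^sub>R (b - a)) {0..1}"
      using iff by blast
    then show ?thesis using m by (simp add: integral_unique)
  next
    case False
    have "\<not> (\<lambda>\<theta>. f (a + (b - a) * \<theta>)) integrable_on {0..1}"
    proof
      assume "(\<lambda>\<theta>. f (a + (b - a) * \<theta>)) integrable_on {0..1}"
      then obtain J where "((\<lambda>\<theta>. f (a + (b - a) * \<theta>)) has_integral ((b - a) *\<^sub>R J) /\<^sub>R (b - a)) {0..1}"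
        using m by (auto simp: integrable_on_def)
      then show False using iff False by blast
    qed
    then show ?thesis using False by (simp add: not_integrable_integral)
  qed
qed simp

lemma continuous_on_integral_between:
  fixes H :: "'a::topological_space \<Rightarrow> real \<Rightarrow> 'b::banach"
  assumes \<alpha>: "continuous_on S \<alpha>" and \<beta>: "continuous_on S \<beta>" and le: "\<And>x. x \<in> S \<Longrightarrow> \<alpha> x \<le> \<beta> x"
    and H: "continuous_on (SIGMA x:S. {\<alpha> x..\<beta> x}) (\<lambda>(x, y). H x y)"
  shows "continuous_on S (\<lambda>x. integral {\<alpha> x..\<beta> x} (H x))"
proof -
  define y where "y p = \<alpha> (fst p) + (\<beta> (fst p) - \<alpha> (fst p)) * snd p" for p :: "'a \<times> real"
  have into: "(\<lambda>p. (fst p, y p)) ` (S \<times> cbox 0 1) \<subseteq> (SIGMA x:S. {\<alpha> x..\<beta> x})"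
  proof (rule image_subsetI)
    fix p :: "'a \<times> real" assume p: "p \<in> S \<times> cbox 0 1"
    then have "(\<beta> (fst p) - \<alpha> (fst p)) * snd p \<le> \<beta> (fst p) - \<alpha> (fst p)"
      using le mult_left_le[of "snd p" "\<beta> (fst p) - \<alpha> (fst p)"] by auto
    then show "(fst p, y p) \<in> (SIGMA x:S. {\<alpha> x..\<beta> x})"
      using p le[of "fst p"] by (auto simp: y_def)
  qed
  have \<alpha>': "continuous_on (S \<times> cbox 0 1) (\<lambda>p. \<alpha> (fst p))"
    and \<beta>': "continuous_on (S \<times> cbox 0 1) (\<lambda>p. \<beta> (fst p))"
    by (auto intro!: continuous_on_compose2[OF \<alpha>] continuous_on_compose2[OF \<beta>]
        continuous_on_fst continuous_on_id)
  have "continuous_on (S \<times> cbox 0 1) (\<lambda>p. (fst p, y p))"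
    unfolding y_def using \<alpha>' \<beta>'
    by (intro continuous_on_Pair continuous_on_fst continuous_on_snd continuous_on_id
        continuous_on_add continuous_on_mult continuous_on_diff)
  from continuous_on_compose2[OF H this into]
  have "continuous_on (S \<times> cbox 0 1) (\<lambda>(x, \<theta>). H x (\<alpha> x + (\<beta> x - \<alpha> x) * \<theta>))"
    by (simp add: y_def case_prod_unfold)
  from integral_continuous_on_param[OF this]
  have "continuous_on S (\<lambda>x. (\<beta> x - \<alpha> x) *\<^sub>R integral {0..1} (\<lambda>\<theta>. H x (\<alpha> x + (\<beta> x - \<alpha> x) * \<theta>)))"
    by (intro continuous_on_scaleR continuous_on_diff \<alpha> \<beta>) simp
  then show ?thesis
    by (rule continuous_on_eq) (rule integral_rescale_unit_interval[OF le, symmetric])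
qed

lemma eq_if_increments_quadratic:
  fixes E :: "real \<Rightarrow> 'a::real_normed_vector"
  assumes "a \<le> b"
    and incr: "\<And>x y. a \<le> x \<Longrightarrow> x \<le> y \<Longrightarrow> y \<le> b \<Longrightarrow> norm (E y - E x) \<le> M * (y - x)\<^sup>2"
  shows "E b = E a"
proof -
  have bound: "norm (E b - E a) \<le> M * (b - a)\<^sup>2 / real n" if n: "n > 0" for n
  proof -
    define x where "x k = a + (b - a) * real k / real n" for k
    have x_mono: "a \<le> x k" "x k \<le> x (Suc k)" for k
      using assms(1) n by (simp_all add: x_def divide_right_mono mult_left_mono)
    have x_le: "x (Suc k) \<le> b" if "k < n" for k
    proof -
      have "(b - a) * real (Suc k) \<le> (b - a) * real n" using that assms(1) by (intro mult_left_mono) auto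
      then show ?thesis using n by (simp add: x_def field_simps)
    qed
    have "E b - E a = (\<Sum>k<n. E (x (Suc k)) - E (x k))"
      using n by (subst sum_lessThan_telescope) (simp add: x_def)
    also have "norm \<dots> \<le> (\<Sum>k<n. M * ((b - a) / real n)\<^sup>2)"
    proof (rule order_trans[OF norm_sum sum_mono])
      fix k assume "k \<in> {..<n}"
      then have "norm (E (x (Suc k)) - E (x k)) \<le> M * (x (Suc k) - x k)\<^sup>2"
        using incr[OF x_mono(1)[of k] x_mono(2)[of k] x_le[of k]] by simp
      also have "x (Suc k) - x k = (b - a) / real n" using n by (simp add: x_def field_simps)
      finally show "norm (E (x (Suc k)) - E (x k)) \<le> M * ((b - a) / real n)\<^sup>2" .
    qed
    also have "\<dots> = M * (b - a)\<^sup>2 / real n" using n by (simp add: power2_eq_square field_simps)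
    finally show ?thesis .
  qed
  have "(\<lambda>n. M * (b - a)\<^sup>2 / real n) \<longlonglongrightarrow> 0" by (rule lim_const_over_n)
  then have "norm (E b - E a) \<le> 0"
    by (rule LIMSEQ_le_const) (use bound in \<open>force intro!: exI[of _ 1]\<close>)
  then show ?thesis by simp
qed

lemma continuous_on_swap_args:
  assumes "continuous_on S (\<lambda>(x, y). H x y)" and "prod.swap ` T \<subseteq> S"
  shows "continuous_on T (\<lambda>(y, x). H x y)"
  using continuous_on_compose2[OF assms(1) continuous_on_swap assms(2)] by (simp add: case_prod_unfold)

lemma continuous_on_slice:
  assumes "continuous_on S (\<lambda>(x, y). H x y)" and "\<And>y. y \<in> T \<Longrightarrow> (x, y) \<in> S"
  shows "continuous_on T (H x)"
  using continuous_on_compose2[OF assms(1) continuous_on_Pair[OF continuous_on_const continuous_on_id]]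
    assms(2) by auto

lemma compact_lower_triangle: "compact (SIGMA s:{0..t}. {0..s::real})"
proof -
  have "(SIGMA s:{0..t}. {0..s}) = {p. 0 \<le> snd p \<and> snd p \<le> fst p \<and> fst p \<le> t}" by auto
  moreover have "closed {p :: real \<times> real. 0 \<le> snd p \<and> snd p \<le> fst p \<and> fst p \<le> t}"
    by (intro closed_Collect_conj closed_Collect_le continuous_intros)
  moreover have "bounded (SIGMA s:{0..t}. {0..s})"
    by (rule bounded_subset[OF bounded_cbox[of "(0, 0)" "(t, t)"]]) (auto simp: cbox_Pair_eq)
  ultimately show ?thesis by (simp add: compact_eq_bounded_closed)
qed

lemma integral_triangle_increment_swapped:
  fixes G :: "real \<Rightarrow> real \<Rightarrow> 'a::banach"
  assumes G: "continuous_on (SIGMA s:{0..t}. {0..s}) (\<lambda>(s, r). G s r)"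
    and xy: "0 \<le> x" "x \<le> y" "y \<le> t"
  shows "integral {0..y} (\<lambda>r. integral {r..y} (\<lambda>s. G s r)) - integral {0..x} (\<lambda>r. integral {r..x} (\<lambda>s. G s r))
       = integral {x..y} (\<lambda>s. integral {0..x} (G s)) + integral {x..y} (\<lambda>r. integral {r..y} (\<lambda>s. G s r))"
proof -
  define Q where "Q y r = integral {r..y} (\<lambda>s. G s r)" for y r
  define R where "R r = integral {x..y} (\<lambda>s. G s r)" for r
  have G_swap: "continuous_on T (\<lambda>(r, s). G s r)" if "T \<subseteq> (SIGMA r:{0..t}. {r..t})" for T
    by (rule continuous_on_swap_args[OF G]) (use that in force)
  have Q_cont: "continuous_on {0..z} (Q z)" if "z \<le> t" for z
    unfolding Q_def
    by (rule continuous_on_integral_between[OF continuous_on_id continuous_on_const _ G_swap])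
      (use that in auto)
  have G_slice: "continuous_on {a..b} (\<lambda>s. G s r)" if "0 \<le> r" "r \<le> a" "b \<le> t" for a b r
    by (rule continuous_on_slice[where x=r, OF G_swap[OF order_refl]]) (use that in auto)
  have R_cont: "continuous_on ({0..x} \<times> cbox x y) (\<lambda>(r, s). G s r)"
    by (rule G_swap) (use xy in auto)
  have "integral {0..x} (Q y) = integral {0..x} (\<lambda>r. Q x r + R r)"
  proof (rule integral_cong)
    fix r assume "r \<in> {0..x}"
    then show "Q y r = Q x r + R r"
      unfolding Q_def R_def using xy
      by (intro Henstock_Kurzweil_Integration.integral_combine[symmetric] integrable_continuous_interval G_slice)
        auto
  qed
  also have "\<dots> = integral {0..x} (Q x) + integral {0..x} R"
    using Q_cont[of x] integral_continuous_on_param[OF R_cont] xy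
    by (intro integral_add integrable_continuous_interval) (auto simp: R_def)
  also have "integral {0..x} R = integral {x..y} (\<lambda>s. integral {0..x} (G s))"
    using integral_swap_continuous[where a=0 and b=x and c=x and d=y and f="\<lambda>r s. G s r"] R_cont
    by (simp add: R_def[abs_def] cbox_Pair_eq)
  finally have left:
    "integral {0..x} (Q y) = integral {0..x} (Q x) + integral {x..y} (\<lambda>s. integral {0..x} (G s))" .
  have "integral {0..y} (Q y) = integral {0..x} (Q y) + integral {x..y} (Q y)"
    using Q_cont[of y] xy
    by (intro Henstock_Kurzweil_Integration.integral_combine[symmetric] integrable_continuous_interval) auto
  then show ?thesis using left unfolding Q_def by simp
qed

lemma integral_triangle_increment:
  fixes G :: "real \<Rightarrow> real \<Rightarrow> 'a::banach"
  assumes G: "continuous_on (SIGMA s:{0..t}. {0..s}) (\<lambda>(s, r). G s r)"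
    and xy: "0 \<le> x" "x \<le> y" "y \<le> t"
  shows "integral {0..y} (\<lambda>s. integral {0..s} (G s)) - integral {0..x} (\<lambda>s. integral {0..s} (G s))
       = integral {x..y} (\<lambda>s. integral {0..x} (G s)) + integral {x..y} (\<lambda>s. integral {x..s} (G s))"
proof -
  have P_cont: "continuous_on {0..t} (\<lambda>s. integral {0..s} (G s))"
    by (rule continuous_on_integral_between[OF continuous_on_const continuous_on_id _ G]) auto
  have left_cont: "continuous_on {x..y} (\<lambda>s. integral {0..x} (G s))"
    by (rule continuous_on_integral_between[OF continuous_on_const continuous_on_const _
          continuous_on_subset[OF G]]) (use xy in auto)
  have right_cont: "continuous_on {x..y} (\<lambda>s. integral {x..s} (G s))"
    by (rule continuous_on_integral_between[OF continuous_on_const continuous_on_id _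
          continuous_on_subset[OF G]]) (use xy in auto)
  have G_slice: "continuous_on {a..b} (G s)" if "0 \<le> a" "b \<le> s" "s \<le> t" for a b s
    by (rule continuous_on_slice[OF G]) (use that in auto)
  have "integral {0..y} (\<lambda>s. integral {0..s} (G s))
      = integral {0..x} (\<lambda>s. integral {0..s} (G s)) + integral {x..y} (\<lambda>s. integral {0..s} (G s))"
    using xy by (intro Henstock_Kurzweil_Integration.integral_combine[symmetric]
        integrable_continuous_interval continuous_on_subset[OF P_cont]) auto
  also have "integral {x..y} (\<lambda>s. integral {0..s} (G s))
      = integral {x..y} (\<lambda>s. integral {0..x} (G s) + integral {x..s} (G s))"
    using xy by (intro integral_cong Henstock_Kurzweil_Integration.integral_combine[symmetric]
        integrable_continuous_interval G_slice) auto
  also have "\<dots> = integral {x..y} (\<lambda>s. integral {0..x} (G s)) + integral {x..y} (\<lambda>s. integral {x..s} (G s))"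
    using left_cont right_cont by (intro integral_add integrable_continuous_interval)
  finally show ?thesis by simp
qed

lemma norm_integral_small_triangles_le:
  fixes G :: "real \<Rightarrow> real \<Rightarrow> 'a::banach"
  assumes G: "continuous_on (SIGMA s:{0..t}. {0..s}) (\<lambda>(s, r). G s r)"
    and M: "\<And>s r. 0 \<le> r \<Longrightarrow> r \<le> s \<Longrightarrow> s \<le> t \<Longrightarrow> norm (G s r) \<le> M"
    and xy: "0 \<le> x" "x \<le> y" "y \<le> t"
  shows "norm (integral {x..y} (\<lambda>s. integral {x..s} (G s)) - integral {x..y} (\<lambda>r. integral {r..y} (\<lambda>s. G s r)))
       \<le> 2 * M * (y - x)\<^sup>2"
proof -
  have G_slice: "continuous_on {a..b} (G s)" if "0 \<le> a" "b \<le> s" "s \<le> t" for a b s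
    by (rule continuous_on_slice[OF G]) (use that in auto)
  have G_slice': "continuous_on {a..b} (\<lambda>s. G s r)" if "0 \<le> r" "r \<le> a" "b \<le> t" for a b r
    by (rule continuous_on_slice[where x=r,
          OF continuous_on_swap_args[where T="SIGMA r:{0..t}. {r..t}", OF G]]) (use that in force)+
  have right_cont: "continuous_on {x..y} (\<lambda>s. integral {x..s} (G s))"
    by (rule continuous_on_integral_between[OF continuous_on_const continuous_on_id _
          continuous_on_subset[OF G]]) (use xy in auto)
  have upper_cont: "continuous_on {x..y} (\<lambda>r. integral {r..y} (\<lambda>s. G s r))"
    by (rule continuous_on_integral_between[OF continuous_on_id continuous_on_const _
          continuous_on_swap_args[OF G]]) (use xy in force)+
  have "norm (G 0 0) \<le> M" using M xy by simp
  then have "0 \<le> M" by (rule order_trans[OF norm_ge_zero])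
  then have segment: "norm (integral {a..b} f) \<le> M * (y - x)"
    if "x \<le> a" "a \<le> b" "b \<le> y" "continuous_on {a..b} f" "\<And>u. u \<in> {a..b} \<Longrightarrow> norm (f u) \<le> M"
    for a b and f :: "real \<Rightarrow> 'a"
    using integral_bound[OF that(2,4,5)] that(1-3) by (meson diff_mono mult_left_mono order.trans order_refl)
  have "norm (integral {x..y} (\<lambda>s. integral {x..s} (G s))
              - integral {x..y} (\<lambda>r. integral {r..y} (\<lambda>s. G s r)))
      \<le> norm (integral {x..y} (\<lambda>s. integral {x..s} (G s)))
        + norm (integral {x..y} (\<lambda>r. integral {r..y} (\<lambda>s. G s r)))"
    by (rule norm_triangle_ineq4)
  also have "\<dots> \<le> M * (y - x) * (y - x) + M * (y - x) * (y - x)"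
  proof (rule add_mono)
    show "norm (integral {x..y} (\<lambda>s. integral {x..s} (G s))) \<le> M * (y - x) * (y - x)"
      using xy by (intro integral_bound right_cont segment G_slice M) auto
    show "norm (integral {x..y} (\<lambda>r. integral {r..y} (\<lambda>s. G s r))) \<le> M * (y - x) * (y - x)"
      using xy by (intro integral_bound upper_cont segment G_slice' M) auto
  qed
  also have "\<dots> = 2 * M * (y - x)\<^sup>2" by (simp add: power2_eq_square)
  finally show ?thesis .
qed

text \<open>The difference \<open>E x\<close> of the two iterated integrals over
  \<open>0 \<le> r \<le> s \<le> x\<close> has increments \<open>O((y - x)\<^sup>2)\<close>, so it is constant.\<close>
lemma integral_triangle_swap:
  fixes G :: "real \<Rightarrow> real \<Rightarrow> 'a::banach"
  assumes G: "continuous_on (SIGMA s:{0..t}. {0..s}) (\<lambda>(s, r). G s r)"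
  shows "integral {0..t} (\<lambda>s. integral {0..s} (G s)) = integral {0..t} (\<lambda>r. integral {r..t} (\<lambda>s. G s r))"
proof (cases "0 \<le> t")
  case True
  obtain M where M: "\<And>s r. 0 \<le> r \<Longrightarrow> r \<le> s \<Longrightarrow> s \<le> t \<Longrightarrow> norm (G s r) \<le> M"
    using compact_imp_bounded[OF compact_continuous_image[OF G compact_lower_triangle]]
    by (force simp: bounded_iff)
  define E where "E x = integral {0..x} (\<lambda>s. integral {0..s} (G s))
                        - integral {0..x} (\<lambda>r. integral {r..x} (\<lambda>s. G s r))" for x
  have "E y - E x = integral {x..y} (\<lambda>s. integral {x..s} (G s))
                    - integral {x..y} (\<lambda>r. integral {r..y} (\<lambda>s. G s r))"
    if "0 \<le> x" "x \<le> y" "y \<le> t" for x y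
    using integral_triangle_increment[OF G that] integral_triangle_increment_swapped[OF G that]
    unfolding E_def by (simp add: algebra_simps)
  then have "E t = E 0"
    using norm_integral_small_triangles_le[OF G M] by (intro eq_if_increments_quadratic True) auto
  then show ?thesis by (simp add: E_def)
qed simp

section \<open>Closed operators and integrals\<close>

lemma integral_in_closed_subspace:
  fixes f :: "real \<Rightarrow> 'a::banach"
  assumes S: "subspace S" "closed S" and f: "f integrable_on {a..b}"
    and f_in: "\<And>x. x \<in> {a..b} \<Longrightarrow> f x \<in> S"
  shows "integral {a..b} f \<in> S"
proof -
  have "integral {a..b} f \<in> closure S"
    unfolding closure_approachable
  proof (intro allI impI)
    fix e :: real assume "e > 0"
    moreover have "(f has_integral integral {a..b} f) (cbox a b)"
      using f by (simp add: has_integral_integral)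
    ultimately obtain \<gamma> where "gauge \<gamma>" and \<gamma>: "\<And>p. p tagged_division_of cbox a b \<and> \<gamma> fine p \<Longrightarrow>
        norm ((\<Sum>(x, k)\<in>p. measure lborel k *\<^sub>R f x) - integral {a..b} f) < e"
      unfolding has_integral by meson
    then obtain p where p: "p tagged_division_of cbox a b" "\<gamma> fine p"
      using fine_division_exists by blast
    have "(\<Sum>(x, k)\<in>p. measure lborel k *\<^sub>R f x) \<in> S"
    proof (rule subspace_sum[OF S(1)], clarify)
      fix x k assume "(x, k) \<in> p"
      then have "x \<in> cbox a b" using p(1) by (meson subsetD tagged_division_ofD(2,3))
      then show "measure lborel k *\<^sub>R f x \<in> S" using f_in S(1) by (simp add: subspace_scale)
    qed
    then show "\<exists>y\<in>S. dist y (integral {a..b} f) < e"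
      using \<gamma>[of p] p by (auto simp: dist_norm)
  qed
  then show ?thesis using S closure_closed by auto
qed

lemma closed_linear_operatorD:
  assumes "closed_linear_operator D A"
  shows "subspace D" and "x \<in> D \<Longrightarrow> y \<in> D \<Longrightarrow> A (x + y) = A x + A y"
    and "x \<in> D \<Longrightarrow> A (c *\<^sub>R x) = c *\<^sub>R A x" and "closed {(x, A x) | x. x \<in> D}"
  using assms unfolding closed_linear_operator_def by auto

lemma subspace_closed_linear_operator_graph:
  assumes "closed_linear_operator D A"
  shows "subspace {(x, A x) | x. x \<in> D}"
  unfolding subspace_def
proof (intro conjI ballI allI)
  note D = closed_linear_operatorD[OF assms]
  show "0 \<in> {(x, A x) | x. x \<in> D}"
    using D(3)[of 0 0] subspace_0[OF D(1)] by (auto simp: zero_prod_def)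
  show "p + q \<in> {(x, A x) | x. x \<in> D}" if "p \<in> {(x, A x) | x. x \<in> D}" "q \<in> {(x, A x) | x. x \<in> D}" for p q
    using that D(2) subspace_add[OF D(1)] by auto
  show "c *\<^sub>R p \<in> {(x, A x) | x. x \<in> D}" if "p \<in> {(x, A x) | x. x \<in> D}" for c p
    using that D(3) subspace_scale[OF D(1)] by auto
qed

lemma closed_linear_operator_integral:
  fixes f g :: "real \<Rightarrow> 'a::banach"
  assumes A: "closed_linear_operator D A"
    and f: "continuous_on {a..b} f" and g: "continuous_on {a..b} g"
    and f_in: "\<And>s. s \<in> {a..b} \<Longrightarrow> f s \<in> D" and Af: "\<And>s. s \<in> {a..b} \<Longrightarrow> A (f s) = g s"
  shows "integral {a..b} f \<in> D" and "A (integral {a..b} f) = integral {a..b} g"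
proof -
  have fg: "(\<lambda>s. (f s, g s)) integrable_on {a..b}"
    using f g by (intro integrable_continuous_interval continuous_on_Pair)
  have "integral {a..b} (\<lambda>s. (f s, g s)) \<in> {(x, A x) | x. x \<in> D}"
    using f_in Af
    by (intro integral_in_closed_subspace[OF subspace_closed_linear_operator_graph[OF A]
          closed_linear_operatorD(4)[OF A] fg]) auto
  moreover have "fst (integral {a..b} (\<lambda>s. (f s, g s))) = integral {a..b} f"
    and "snd (integral {a..b} (\<lambda>s. (f s, g s))) = integral {a..b} g"
    using integral_linear[OF fg bounded_linear_fst] integral_linear[OF fg bounded_linear_snd]
    by (simp_all add: o_def)
  ultimately show "integral {a..b} f \<in> D" and "A (integral {a..b} f) = integral {a..b} g" by auto
qed

lemma semiflow_0: "semiflow phi \<Longrightarrow> phi 0 w = w"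
  unfolding semiflow_def by blast

lemma semiflow_add: "semiflow phi \<Longrightarrow> 0 \<le> t \<Longrightarrow> 0 \<le> s \<Longrightarrow> phi (t + s) w = phi t (phi s w)"
  unfolding semiflow_def by blast

lemma continuous_on_semiflow:
  assumes "semiflow phi" and "continuous_on S p" and "\<And>x. x \<in> S \<Longrightarrow> 0 \<le> p x"
  shows "continuous_on S (\<lambda>x. phi (p x) w)"
proof -
  have "continuous_on ({0..} \<times> UNIV) (\<lambda>(t, w). phi t w)"
    using assms(1) unfolding semiflow_def by blast
  from continuous_on_compose2[OF this continuous_on_Pair[OF assms(2) continuous_on_const]]
  show ?thesis using assms(3) by auto
qed

lemma continuous_on_blinfun_along_semiflow:
  fixes C :: "'m::topological_space \<Rightarrow> ('a::real_normed_vector \<Rightarrow>\<^sub>L 'b::real_normed_vector)"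
  assumes "semiflow phi" and C: "continuous_on UNIV (\<lambda>(w, z). blinfun_apply (C w) z)"
    and "continuous_on S p" and "\<And>x. x \<in> S \<Longrightarrow> 0 \<le> p x" and q: "continuous_on S q"
  shows "continuous_on S (\<lambda>x. C (phi (p x) w) (q x))"
  using continuous_on_compose2[OF C continuous_on_Pair[OF continuous_on_semiflow[OF assms(1,3,4)] q]]
  by auto

lemma continuous_on_forward_kernel:
  assumes "semiflow phi" and T: "continuous_on U (\<lambda>(t, w, x). T t w x)" and x: "continuous_on {0..a} x"
    and into: "\<And>t s. 0 \<le> s \<Longrightarrow> s \<le> t \<Longrightarrow> t \<le> a \<Longrightarrow> (t - s, phi s w, x s) \<in> U"
  shows "continuous_on (SIGMA t:{0..a}. {0..t}) (\<lambda>(t, s). T (t - s) (phi s w) (x s))"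
proof -
  have "continuous_on (SIGMA t:{0..a}. {0..t}) (\<lambda>p. (fst p - snd p, phi (snd p) w, x (snd p)))"
    by (intro continuous_on_Pair continuous_on_diff continuous_on_fst continuous_on_snd continuous_on_id
        continuous_on_semiflow[OF assms(1)] continuous_on_compose2[OF x]) auto
  moreover have "(\<lambda>p. (fst p - snd p, phi (snd p) w, x (snd p))) ` (SIGMA t:{0..a}. {0..t}) \<subseteq> U"
    using into by force
  ultimately have "continuous_on (SIGMA t:{0..a}. {0..t})
      (\<lambda>p. case (fst p - snd p, phi (snd p) w, x (snd p)) of (t, w, x) \<Rightarrow> T t w x)"
    by (rule continuous_on_compose2[OF T])
  then show ?thesis by (simp add: case_prod_unfold)
qed

lemma continuous_on_backward_kernel:
  assumes "semiflow phi" and T: "continuous_on U (\<lambda>(t, w, x). T t w x)" and x: "continuous_on {0..a} x"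
    and into: "\<And>t s. 0 \<le> t \<Longrightarrow> t \<le> s \<Longrightarrow> s \<le> a \<Longrightarrow> (s - t, phi t w, x s) \<in> U"
  shows "continuous_on (SIGMA t:{0..a}. {t..a}) (\<lambda>(t, s). T (s - t) (phi t w) (x s))"
proof -
  have "continuous_on (SIGMA t:{0..a}. {t..a}) (\<lambda>p. (snd p - fst p, phi (fst p) w, x (snd p)))"
    by (intro continuous_on_Pair continuous_on_diff continuous_on_fst continuous_on_snd continuous_on_id
        continuous_on_semiflow[OF assms(1)] continuous_on_compose2[OF x]) auto
  moreover have "(\<lambda>p. (snd p - fst p, phi (fst p) w, x (snd p))) ` (SIGMA t:{0..a}. {t..a}) \<subseteq> U"
    using into by force
  ultimately have "continuous_on (SIGMA t:{0..a}. {t..a})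
      (\<lambda>p. case (snd p - fst p, phi (fst p) w, x (snd p)) of (t, w, x) \<Rightarrow> T t w x)"
    by (rule continuous_on_compose2[OF T])
  then show ?thesis by (simp add: case_prod_unfold)
qed

lemma mild_sol_continuous: "mild_sol phi D A B L g w a0 b u \<Longrightarrow> continuous_on {a0..b} u"
  unfolding mild_sol_def by blast

lemma mild_solD:
  assumes "mild_sol phi D A B L g w a0 b u" and "t \<in> {a0..b}"
  shows "integral {a0..t} (\<lambda>s. B (phi s w) (u s)) \<in> D"
    and "u t = u a0 + A (integral {a0..t} (\<lambda>s. B (phi s w) (u s)))
               + integral {a0..t} (\<lambda>s. L (phi s w) (u s) + g s)"
  using assms unfolding mild_sol_def by blast+

lemma mild_sol_cong:
  fixes u v :: "real \<Rightarrow> 'z::banach"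
  assumes u: "mild_sol phi D A B L g w a0 b u" and vu: "\<And>t. t \<in> {a0..b} \<Longrightarrow> v t = u t"
  shows "mild_sol phi D A B L g w a0 b v"
  unfolding mild_sol_def
proof (intro conjI ballI)
  show "continuous_on {a0..b} v"
    using continuous_on_eq[OF mild_sol_continuous[OF u]] vu by metis
  fix t assume t: "t \<in> {a0..b}"
  have int_eq: "integral {a0..t} (\<lambda>s. f s (v s)) = integral {a0..t} (\<lambda>s. f s (u s))"
    for f :: "real \<Rightarrow> 'z \<Rightarrow> 'z"
    using vu t by (intro integral_cong) auto
  show "integral {a0..t} (\<lambda>s. B (phi s w) (v s)) \<in> D"
    using int_eq[of "\<lambda>s. B (phi s w)"] mild_solD(1)[OF u t] by simp
  have "a0 \<in> {a0..b}" using t by simp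
  then show "v t = v a0 + A (integral {a0..t} (\<lambda>s. B (phi s w) (v s)))
      + integral {a0..t} (\<lambda>s. L (phi s w) (v s) + g s)"
    using int_eq[of "\<lambda>s. B (phi s w)"] int_eq[of "\<lambda>s z. L (phi s w) z + g s"] mild_solD(2)[OF u t] vu t
    by simp
qed

lemma mild_sol_restrict:
  assumes "mild_sol phi D A B L g w a0 b u" and "b' \<le> b"
  shows "mild_sol phi D A B L g w a0 b' u"
proof -
  have "{a0..b'} \<subseteq> {a0..b}" using assms(2) by auto
  then show ?thesis using assms(1) continuous_on_subset unfolding mild_sol_def by blast
qed

lemma C0_linear_cocycleD:
  assumes "C0_linear_cocycle phi D A B L T0"
  shows "T0 0 w = id_blinfun"
    and "continuous_on ({0..} \<times> UNIV \<times> UNIV) (\<lambda>(t, w, x). blinfun_apply (T0 t w) x)"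
    and "0 \<le> b \<Longrightarrow> mild_sol phi D A B L (\<lambda>_. 0) w 0 b (\<lambda>t. T0 t w x)"
    and "0 \<le> b \<Longrightarrow> mild_sol phi D A B L (\<lambda>_. 0) w 0 b u \<Longrightarrow> t \<in> {0..b} \<Longrightarrow> u t = T0 t w (u 0)"
  using assms unfolding C0_linear_cocycle_def by blast+

lemma C0_cocycle_correspondenceD:
  assumes C: "C0_cocycle_correspondence phi D A B L P T1 Sb"
  shows "P w (P w x) = P w x"
    and "continuous_on UNIV (\<lambda>(w, z). blinfun_apply (P w) z)"
    and "0 \<le> t \<Longrightarrow> T1 t w (P w x) \<in> range (blinfun_apply (P (phi t w)))"
    and "0 \<le> t \<Longrightarrow> T1 t w (a *\<^sub>R P w x + c *\<^sub>R P w y) = a *\<^sub>R T1 t w (P w x) + c *\<^sub>R T1 t w (P w y)"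
    and "T1 0 w (P w x) = P w x"
    and "continuous_on {(t, w, x). t \<ge> 0 \<and> x \<in> range (blinfun_apply (P w))} (\<lambda>(t, w, x). T1 t w x)"
    and "0 \<le> t \<Longrightarrow> Sb t w (y - P (phi t w) y) \<in> range (\<lambda>z. z - P w z)"
    and "0 \<le> t \<Longrightarrow> Sb t w (a *\<^sub>R (x - P (phi t w) x) + c *\<^sub>R (y - P (phi t w) y))
                    = a *\<^sub>R Sb t w (x - P (phi t w) x) + c *\<^sub>R Sb t w (y - P (phi t w) y)"
    and "Sb 0 w (y - P w y) = y - P w y"
    and "continuous_on {(t, w, y). t \<ge> 0 \<and> y \<in> range (\<lambda>z. z - P (phi t w) z)} (\<lambda>(t, w, y). Sb t w y)"
  using C unfolding C0_cocycle_correspondence_def Let_def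
  apply -
  subgoal by (elim conjE) (metis blinfun_apply_blinfun_compose)
  subgoal by (elim conjE)
  subgoal by (elim conjE) simp
  subgoal by (elim conjE) simp
  subgoal by (elim conjE) simp
  subgoal by (elim conjE)
  subgoal by (elim conjE) simp
  subgoal by (elim conjE) simp
  subgoal by (elim conjE) simp
  subgoal by (elim conjE)
  done

lemma C0_cocycle_correspondence_zero:
  assumes C: "C0_cocycle_correspondence phi D A B L P T1 Sb" and t: "0 \<le> t"
  shows "T1 t w 0 = 0" and "Sb t w 0 = 0"
  using C0_cocycle_correspondenceD(4)[OF C t, where a=0 and c=0 and x=0 and y=0]
    C0_cocycle_correspondenceD(8)[OF C t, where a=0 and c=0 and x=0 and y=0]
  by simp_all

lemma C0_cocycle_correspondence_projections:
  assumes C: "C0_cocycle_correspondence phi D A B L P T1 Sb" and t: "0 \<le> t"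
  shows "P (phi t w) (T1 t w (P w x)) = T1 t w (P w x)"
    and "P w (Sb t w (y - P (phi t w) y)) = 0"
proof -
  obtain x' where "T1 t w (P w x) = P (phi t w) x'"
    using C0_cocycle_correspondenceD(3)[OF C t] by blast
  then show "P (phi t w) (T1 t w (P w x)) = T1 t w (P w x)"
    by (simp add: C0_cocycle_correspondenceD(1)[OF C])
  obtain y' where "Sb t w (y - P (phi t w) y) = y' - P w y'"
    using C0_cocycle_correspondenceD(7)[OF C t] by blast
  then show "P w (Sb t w (y - P (phi t w) y)) = 0"
    by (simp add: blinfun.diff_right C0_cocycle_correspondenceD(1)[OF C])
qed

lemma C0_cocycle_correspondence_boundary_value:
  assumes C: "C0_cocycle_correspondence phi D A B L P T1 Sb" and "0 \<le> t1" "t1 \<le> t2"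
  shows "mild_sol phi D A B L (\<lambda>_. 0) w t1 t2
           (\<lambda>t. T1 (t - t1) (phi t1 w) (P (phi t1 w) x) + Sb (t2 - t) (phi t w) (y - P (phi t2 w) y))"
  using C assms(2,3) unfolding C0_cocycle_correspondence_def Let_def by (elim conjE) simp

lemma C0_cocycle_correspondence_unique:
  assumes C: "C0_cocycle_correspondence phi D A B L P T1 Sb" and t12: "0 \<le> t1" "t1 \<le> t2"
    and u: "mild_sol phi D A B L (\<lambda>_. 0) w t1 t2 u" and t: "t \<in> {t1..t2}"
  shows "u t = T1 (t - t1) (phi t1 w) (P (phi t1 w) (u t1))
               + Sb (t2 - t) (phi t w) (u t2 - P (phi t2 w) (u t2))"
proof -
  have "\<forall>w t1 t2 x1 y2. 0 \<le> t1 \<longrightarrow> t1 \<le> t2 \<longrightarrow> x1 \<in> range (blinfun_apply (P (phi t1 w))) \<longrightarrow>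
           y2 \<in> range (\<lambda>z. z - P (phi t2 w) z) \<longrightarrow>
           (\<forall>u. mild_sol phi D A B L (\<lambda>_. 0) w t1 t2 u \<and> P (phi t1 w) (u t1) = x1
                 \<and> u t2 - P (phi t2 w) (u t2) = y2 \<longrightarrow> (\<forall>t\<in>{t1..t2}. u t = T1 (t - t1) (phi t1 w) x1 + Sb (t2 - t) (phi t w) y2))"
    using C unfolding C0_cocycle_correspondence_def Let_def
    \<comment> \<open>\<open>blast\<close> fails unless the continuity conjuncts (set-builder domains) are dropped\<close>
    by (elim conjE, (thin_tac "continuous_on _ _")+) blast
  moreover have "P (phi t1 w) (u t1) \<in> range (blinfun_apply (P (phi t1 w)))" by (rule rangeI)
  moreover have "u t2 - P (phi t2 w) (u t2) \<in> range (\<lambda>z. z - P (phi t2 w) z)"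
    using rangeI[of "\<lambda>z. z - P (phi t2 w) z" "u t2"] by simp
  ultimately have "\<forall>t\<in>{t1..t2}. u t = T1 (t - t1) (phi t1 w) (P (phi t1 w) (u t1))
                                     + Sb (t2 - t) (phi t w) (u t2 - P (phi t2 w) (u t2))"
    using t12 u by blast
  with t show ?thesis by blast
qed

section \<open>Superposition of mild solutions\<close>

context
  fixes phi :: "real \<Rightarrow> 'm::topological_space \<Rightarrow> 'm" and D :: "'z::banach set" and A :: "'z \<Rightarrow> 'z"
    and B L :: "'m \<Rightarrow> ('z \<Rightarrow>\<^sub>L 'z)"
  assumes semiflow: "semiflow phi" and closed_A: "closed_linear_operator D A"
    and B_cont: "continuous_on UNIV (\<lambda>(w, z). blinfun_apply (B w) z)"
    and L_cont: "continuous_on UNIV (\<lambda>(w, z). blinfun_apply (L w) z)"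
begin

lemma mild_sol_lincomb:
  assumes a0: "0 \<le> a0" and g1: "continuous_on {a0..b} g1" and g2: "continuous_on {a0..b} g2"
    and u1: "mild_sol phi D A B L g1 w a0 b u1" and u2: "mild_sol phi D A B L g2 w a0 b u2"
  shows "mild_sol phi D A B L (\<lambda>s. g1 s + c *\<^sub>R g2 s) w a0 b (\<lambda>s. u1 s + c *\<^sub>R u2 s)"
  unfolding mild_sol_def
proof (intro conjI ballI)
  note A = closed_linear_operatorD[OF closed_A]
  show "continuous_on {a0..b} (\<lambda>s. u1 s + c *\<^sub>R u2 s)"
    by (intro continuous_intros mild_sol_continuous[OF u1] mild_sol_continuous[OF u2])
  fix t assume t: "t \<in> {a0..b}"
  have sub: "{a0..t} \<subseteq> {a0..b}" using t by auto
  have cont: "continuous_on {a0..t} (\<lambda>s. C (phi s w) (u s))"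
    if "continuous_on UNIV (\<lambda>(w, z). blinfun_apply (C w) z)" "mild_sol phi D A B L g w a0 b u"
    for C :: "'m \<Rightarrow> ('z \<Rightarrow>\<^sub>L 'z)" and g u
    using a0 by (intro continuous_on_blinfun_along_semiflow[OF semiflow that(1) continuous_on_id]
        continuous_on_subset[OF mild_sol_continuous[OF that(2)] sub]) auto
  have lincomb: "integral {a0..t} (\<lambda>s. f s + c *\<^sub>R g s) = integral {a0..t} f + c *\<^sub>R integral {a0..t} g"
    if "continuous_on {a0..t} f" "continuous_on {a0..t} g" for f g :: "real \<Rightarrow> 'z"
    using that by (simp add: integral_add integrable_cmul integrable_continuous_interval)
  have IB: "integral {a0..t} (\<lambda>s. B (phi s w) (u1 s + c *\<^sub>R u2 s))
      = integral {a0..t} (\<lambda>s. B (phi s w) (u1 s)) + c *\<^sub>R integral {a0..t} (\<lambda>s. B (phi s w) (u2 s))"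
    unfolding blinfun.add_right blinfun.scaleR_right by (intro lincomb cont[OF B_cont u1] cont[OF B_cont u2])
  have "integral {a0..t} (\<lambda>s. L (phi s w) (u1 s + c *\<^sub>R u2 s) + (g1 s + c *\<^sub>R g2 s))
      = integral {a0..t} (\<lambda>s. (L (phi s w) (u1 s) + g1 s) + c *\<^sub>R (L (phi s w) (u2 s) + g2 s))"
    by (simp add: blinfun.add_right blinfun.scaleR_right scaleR_add_right add_ac)
  also have "\<dots> = integral {a0..t} (\<lambda>s. L (phi s w) (u1 s) + g1 s)
      + c *\<^sub>R integral {a0..t} (\<lambda>s. L (phi s w) (u2 s) + g2 s)"
    using continuous_on_subset[OF g1 sub] continuous_on_subset[OF g2 sub]
    by (intro lincomb continuous_on_add cont[OF L_cont u1] cont[OF L_cont u2])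
  finally have IL: "integral {a0..t} (\<lambda>s. L (phi s w) (u1 s + c *\<^sub>R u2 s) + (g1 s + c *\<^sub>R g2 s))
      = integral {a0..t} (\<lambda>s. L (phi s w) (u1 s) + g1 s)
        + c *\<^sub>R integral {a0..t} (\<lambda>s. L (phi s w) (u2 s) + g2 s)" .
  have D1: "integral {a0..t} (\<lambda>s. B (phi s w) (u1 s)) \<in> D"
    and D2: "integral {a0..t} (\<lambda>s. B (phi s w) (u2 s)) \<in> D"
    using mild_solD(1)[OF u1 t] mild_solD(1)[OF u2 t] .
  show "integral {a0..t} (\<lambda>s. B (phi s w) (u1 s + c *\<^sub>R u2 s)) \<in> D"
    unfolding IB using D1 D2 A(1) by (simp add: subspace_add subspace_scale)
  show "u1 t + c *\<^sub>R u2 t = u1 a0 + c *\<^sub>R u2 a0 + A (integral {a0..t} (\<lambda>s. B (phi s w) (u1 s + c *\<^sub>R u2 s)))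
      + integral {a0..t} (\<lambda>s. L (phi s w) (u1 s + c *\<^sub>R u2 s) + (g1 s + c *\<^sub>R g2 s))"
    unfolding IB IL A(2)[OF D1 subspace_scale[OF A(1) D2]] A(3)[OF D2]
    using mild_solD(2)[OF u1 t] mild_solD(2)[OF u2 t] by (simp add: algebra_simps)
qed

lemma mild_sol_shift:
  assumes r: "0 \<le> r" and u: "mild_sol phi D A B L g (phi r w) 0 b u"
  shows "mild_sol phi D A B L (\<lambda>s. g (s - r)) w r (r + b) (\<lambda>s. u (s - r))"
  unfolding mild_sol_def
proof (intro conjI ballI)
  show "continuous_on {r..r + b} (\<lambda>s. u (s - r))"
    by (rule continuous_on_compose2[OF mild_sol_continuous[OF u] continuous_on_diff[OF continuous_on_id
          continuous_on_const]]) auto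
  fix t assume t: "t \<in> {r..r + b}"
  have shift: "integral {r..t} (\<lambda>s. f (phi s w) (s - r)) = integral {0..t - r} (\<lambda>s. f (phi s (phi r w)) s)"
    for f :: "'m \<Rightarrow> real \<Rightarrow> 'z"
  proof -
    have "integral {0..t - r} (\<lambda>s. f (phi s (phi r w)) s)
        = integral {0..t - r} ((\<lambda>s. f (phi s w) (s - r)) \<circ> (+) r)"
    proof (rule integral_cong)
      fix s assume "s \<in> {0..t - r}"
      then show "f (phi s (phi r w)) s = ((\<lambda>s. f (phi s w) (s - r)) \<circ> (+) r) s"
        using semiflow_add[OF semiflow, of s r w] r by (simp add: add.commute)
    qed
    also have "\<dots> = integral {r..t} (\<lambda>s. f (phi s w) (s - r))"
      using integral_shift_Icc_real[of 0 "t - r" _ r] by simp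
    finally show ?thesis ..
  qed
  have \<tau>: "t - r \<in> {0..b}" using t by auto
  show "integral {r..t} (\<lambda>s. B (phi s w) (u (s - r))) \<in> D"
    using shift[of "\<lambda>v s. B v (u s)"] mild_solD(1)[OF u \<tau>] by simp
  show "u (t - r) = u (r - r) + A (integral {r..t} (\<lambda>s. B (phi s w) (u (s - r))))
      + integral {r..t} (\<lambda>s. L (phi s w) (u (s - r)) + g (s - r))"
    using shift[of "\<lambda>v s. B v (u s)"] shift[of "\<lambda>v s. L v (u s) + g s"] mild_solD(2)[OF u \<tau>] by simp
qed

lemma continuous_on_kernel_along_semiflow:
  fixes C :: "'m \<Rightarrow> ('z \<Rightarrow>\<^sub>L 'z)"
  assumes C: "continuous_on UNIV (\<lambda>(w, z). blinfun_apply (C w) z)"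
    and K: "continuous_on S (\<lambda>(s, r). K s r)" and nonneg: "\<And>s r. (s, r) \<in> S \<Longrightarrow> 0 \<le> s"
  shows "continuous_on S (\<lambda>(s, r). C (phi s w) (K s r))"
  using continuous_on_blinfun_along_semiflow[OF semiflow C continuous_on_fst[OF continuous_on_id] _ K, of w]
    nonneg by (auto simp: case_prod_unfold)

lemma integral_blinfun_lower_triangle:
  fixes C :: "'m \<Rightarrow> ('z \<Rightarrow>\<^sub>L 'z)"
  assumes C: "continuous_on UNIV (\<lambda>(w, z). blinfun_apply (C w) z)"
    and K: "continuous_on (SIGMA s:{0..t}. {0..s}) (\<lambda>(s, r). K s r)"
  shows "integral {0..t} (\<lambda>s. C (phi s w) (integral {0..s} (K s)))
       = integral {0..t} (\<lambda>r. integral {r..t} (\<lambda>s. C (phi s w) (K s r)))"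
proof -
  have "integral {0..t} (\<lambda>s. C (phi s w) (integral {0..s} (K s)))
      = integral {0..t} (\<lambda>s. integral {0..s} (\<lambda>r. C (phi s w) (K s r)))"
  proof (rule integral_cong)
    fix s assume "s \<in> {0..t}"
    then have "K s integrable_on {0..s}"
      by (intro integrable_continuous_interval continuous_on_slice[OF K]) auto
    then show "C (phi s w) (integral {0..s} (K s)) = integral {0..s} (\<lambda>r. C (phi s w) (K s r))"
      by (rule integral_blinfun_apply[symmetric])
  qed
  also have "\<dots> = integral {0..t} (\<lambda>r. integral {r..t} (\<lambda>s. C (phi s w) (K s r)))"
    by (rule integral_triangle_swap[OF continuous_on_kernel_along_semiflow[OF C K]]) auto
  finally show ?thesis .
qed

lemma integral_blinfun_upper_triangle:
  fixes C :: "'m \<Rightarrow> ('z \<Rightarrow>\<^sub>L 'z)"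
  assumes C: "continuous_on UNIV (\<lambda>(w, z). blinfun_apply (C w) z)"
    and K: "continuous_on (SIGMA s:{0..a}. {s..a}) (\<lambda>(s, r). K s r)" and t: "t \<in> {0..a}"
  shows "integral {0..t} (\<lambda>s. C (phi s w) (integral {s..a} (K s)))
       = integral {0..t} (\<lambda>r. integral {0..r} (\<lambda>s. C (phi s w) (K s r)))
         + integral {t..a} (\<lambda>r. integral {0..t} (\<lambda>s. C (phi s w) (K s r)))"
proof -
  define G where "G s r = C (phi s w) (K s r)" for s r
  have G: "continuous_on T (\<lambda>(s, r). G s r)" if "T \<subseteq> (SIGMA s:{0..a}. {s..a})" for T
    unfolding G_def
    by (rule continuous_on_subset[OF continuous_on_kernel_along_semiflow[OF C K] that]) auto
  have "integral {0..t} (\<lambda>s. C (phi s w) (integral {s..a} (K s)))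
      = integral {0..t} (\<lambda>s. integral {s..t} (G s) + integral {t..a} (G s))"
  proof (rule integral_cong)
    fix s assume s: "s \<in> {0..t}"
    then have "K s integrable_on {s..a}"
      using t by (intro integrable_continuous_interval continuous_on_slice[OF K]) auto
    then have "C (phi s w) (integral {s..a} (K s)) = integral {s..a} (G s)"
      unfolding G_def by (rule integral_blinfun_apply[symmetric])
    also have "\<dots> = integral {s..t} (G s) + integral {t..a} (G s)"
      using s t by (intro Henstock_Kurzweil_Integration.integral_combine[symmetric]
          integrable_continuous_interval continuous_on_slice[OF G[OF order_refl]]) auto
    finally show "C (phi s w) (integral {s..a} (K s)) = integral {s..t} (G s) + integral {t..a} (G s)" .
  qed
  also have "\<dots> = integral {0..t} (\<lambda>s. integral {s..t} (G s)) + integral {0..t} (\<lambda>s. integral {t..a} (G s))"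
    using t by (intro integral_add integrable_continuous_interval continuous_on_integral_between G) auto
  also have "integral {0..t} (\<lambda>s. integral {s..t} (G s)) = integral {0..t} (\<lambda>r. integral {0..r} (\<lambda>s. G s r))"
    using t by (intro integral_triangle_swap[where G="\<lambda>r s. G s r", symmetric]
        continuous_on_swap_args[OF G[OF order_refl]]) force
  also have "integral {0..t} (\<lambda>s. integral {t..a} (G s)) = integral {t..a} (\<lambda>r. integral {0..t} (\<lambda>s. G s r))"
    using integral_swap_continuous[where a=0 and b=t and c=t and d=a and f=G] G[of "{0..t} \<times> {t..a}"] t
    by (simp add: cbox_Pair_eq subset_iff)
  finally show ?thesis unfolding G_def .
qed

lemma continuous_on_integral_kernel_along_semiflow:
  fixes C :: "'m \<Rightarrow> ('z \<Rightarrow>\<^sub>L 'z)" and K :: "real \<Rightarrow> real \<Rightarrow> 'z"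
  assumes C: "continuous_on UNIV (\<lambda>(w, z). blinfun_apply (C w) z)"
    and \<alpha>: "continuous_on S \<alpha>" and \<beta>: "continuous_on S \<beta>"
    and \<alpha>\<beta>: "\<And>r. r \<in> S \<Longrightarrow> 0 \<le> \<alpha> r \<and> \<alpha> r \<le> \<beta> r"
    and K: "continuous_on (SIGMA r:S. {\<alpha> r..\<beta> r}) (\<lambda>(r, s). K s r)"
  shows "continuous_on S (\<lambda>r. integral {\<alpha> r..\<beta> r} (\<lambda>s. C (phi s w) (K s r)))"
proof -
  have "continuous_on (SIGMA r:S. {\<alpha> r..\<beta> r}) (\<lambda>(r, s). C (phi s w) (K s r))"
    using continuous_on_blinfun_along_semiflow[OF semiflow C continuous_on_snd[OF continuous_on_id] _ K, of w] \<alpha>\<beta>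
    by (force simp: case_prod_unfold)
  then show ?thesis using \<alpha>\<beta> by (intro continuous_on_integral_between \<alpha> \<beta>) auto
qed

lemma integral_of_mild_solutions:
  fixes K :: "real \<Rightarrow> real \<Rightarrow> 'z"
  assumes \<alpha>: "continuous_on {c..d} \<alpha>" and \<beta>: "continuous_on {c..d} \<beta>"
    and \<alpha>\<beta>: "\<And>r. r \<in> {c..d} \<Longrightarrow> 0 \<le> \<alpha> r \<and> \<alpha> r \<le> \<beta> r"
    and K: "continuous_on (SIGMA r:{c..d}. {\<alpha> r..\<beta> r}) (\<lambda>(r, s). K s r)"
    and mild: "\<And>r. r \<in> {c..d} \<Longrightarrow> mild_sol phi D A B L (\<lambda>_. 0) w (\<alpha> r) (\<beta> r) (\<lambda>s. K s r)"
  shows "integral {c..d} (\<lambda>r. integral {\<alpha> r..\<beta> r} (\<lambda>s. B (phi s w) (K s r))) \<in> D"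
    and "A (integral {c..d} (\<lambda>r. integral {\<alpha> r..\<beta> r} (\<lambda>s. B (phi s w) (K s r))))
       = integral {c..d} (\<lambda>r. K (\<beta> r) r) - integral {c..d} (\<lambda>r. K (\<alpha> r) r)
         - integral {c..d} (\<lambda>r. integral {\<alpha> r..\<beta> r} (\<lambda>s. L (phi s w) (K s r)))"
proof -
  note integral_cont = continuous_on_integral_kernel_along_semiflow[OF _ \<alpha> \<beta> \<alpha>\<beta> K]
  have K_at: "continuous_on {c..d} (\<lambda>r. K (\<gamma> r) r)"
    if "continuous_on {c..d} \<gamma>" "\<And>r. r \<in> {c..d} \<Longrightarrow> \<alpha> r \<le> \<gamma> r \<and> \<gamma> r \<le> \<beta> r" for \<gamma>
    using continuous_on_compose2[OF K continuous_on_Pair[OF continuous_on_id that(1)]] that(2) by force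
  have K_\<alpha>: "continuous_on {c..d} (\<lambda>r. K (\<alpha> r) r)" and K_\<beta>: "continuous_on {c..d} (\<lambda>r. K (\<beta> r) r)"
    using \<alpha>\<beta> by (auto intro!: K_at \<alpha> \<beta>)
  have "integral {\<alpha> r..\<beta> r} (\<lambda>s. B (phi s w) (K s r)) \<in> D"
    and "A (integral {\<alpha> r..\<beta> r} (\<lambda>s. B (phi s w) (K s r)))
       = K (\<beta> r) r - K (\<alpha> r) r - integral {\<alpha> r..\<beta> r} (\<lambda>s. L (phi s w) (K s r))" if "r \<in> {c..d}" for r
    using mild_solD[OF mild[OF that], of "\<beta> r"] \<alpha>\<beta>[OF that] by (auto simp: algebra_simps)
  from closed_linear_operator_integral[OF closed_A integral_cont[OF B_cont] _ this]
  show "integral {c..d} (\<lambda>r. integral {\<alpha> r..\<beta> r} (\<lambda>s. B (phi s w) (K s r))) \<in> D"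
    and "A (integral {c..d} (\<lambda>r. integral {\<alpha> r..\<beta> r} (\<lambda>s. B (phi s w) (K s r))))
       = integral {c..d} (\<lambda>r. K (\<beta> r) r) - integral {c..d} (\<lambda>r. K (\<alpha> r) r)
         - integral {c..d} (\<lambda>r. integral {\<alpha> r..\<beta> r} (\<lambda>s. L (phi s w) (K s r)))"
    using K_\<alpha> K_\<beta> integral_cont[OF L_cont]
    by (simp_all add: integral_diff integrable_continuous_interval continuous_on_diff)
qed

lemma integral_of_mild_solutions_lower_triangle:
  fixes K :: "real \<Rightarrow> real \<Rightarrow> 'z"
  assumes K: "continuous_on (SIGMA s:{0..a}. {0..s}) (\<lambda>(s, r). K s r)"
    and mild: "\<And>r. r \<in> {0..a} \<Longrightarrow> mild_sol phi D A B L (\<lambda>_. 0) w r a (\<lambda>s. K s r)"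
    and t: "t \<in> {0..a}"
  shows "integral {0..t} (\<lambda>s. B (phi s w) (integral {0..s} (K s))) \<in> D"
    and "A (integral {0..t} (\<lambda>s. B (phi s w) (integral {0..s} (K s))))
       = integral {0..t} (K t) - integral {0..t} (\<lambda>r. K r r)
         - integral {0..t} (\<lambda>s. L (phi s w) (integral {0..s} (K s)))"
proof -
  have K_t: "continuous_on (SIGMA s:{0..t}. {0..s}) (\<lambda>(s, r). K s r)"
    by (rule continuous_on_subset[OF K]) (use t in auto)
  have K_swap: "continuous_on (SIGMA r:{0..t}. {r..t}) (\<lambda>(r, s). K s r)"
    by (rule continuous_on_swap_args[OF K]) (use t in force)
  have mild_t: "mild_sol phi D A B L (\<lambda>_. 0) w r t (\<lambda>s. K s r)" if "r \<in> {0..t}" for r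
    using mild_sol_restrict[OF mild] that t by auto
  show "integral {0..t} (\<lambda>s. B (phi s w) (integral {0..s} (K s))) \<in> D"
    and "A (integral {0..t} (\<lambda>s. B (phi s w) (integral {0..s} (K s))))
       = integral {0..t} (K t) - integral {0..t} (\<lambda>r. K r r)
         - integral {0..t} (\<lambda>s. L (phi s w) (integral {0..s} (K s)))"
    unfolding integral_blinfun_lower_triangle[OF B_cont K_t] integral_blinfun_lower_triangle[OF L_cont K_t]
    using integral_of_mild_solutions[where \<alpha>="\<lambda>r. r" and \<beta>="\<lambda>_. t",
        OF continuous_on_id continuous_on_const _ K_swap mild_t] t
    by auto
qed

lemma integral_of_mild_solutions_upper_triangle:
  fixes K :: "real \<Rightarrow> real \<Rightarrow> 'z"
  assumes K: "continuous_on (SIGMA s:{0..a}. {s..a}) (\<lambda>(s, r). K s r)"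
    and mild: "\<And>r. r \<in> {0..a} \<Longrightarrow> mild_sol phi D A B L (\<lambda>_. 0) w 0 r (\<lambda>s. K s r)"
    and t: "t \<in> {0..a}"
  shows "integral {0..t} (\<lambda>s. B (phi s w) (integral {s..a} (K s))) \<in> D"
    and "A (integral {0..t} (\<lambda>s. B (phi s w) (integral {s..a} (K s))))
       = integral {0..t} (\<lambda>r. K r r) + integral {t..a} (K t) - integral {0..a} (K 0)
         - integral {0..t} (\<lambda>s. L (phi s w) (integral {s..a} (K s)))"
proof -
  note A = closed_linear_operatorD[OF closed_A]
  have K_swap: "continuous_on T (\<lambda>(r, s). K s r)" if "T \<subseteq> (SIGMA r:{0..a}. {0..r})" for T
    by (rule continuous_on_swap_args[OF K]) (use that in force)
  have K_lower: "continuous_on (SIGMA r:{0..t}. {0..r}) (\<lambda>(r, s). K s r)"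
    and K_upper: "continuous_on (SIGMA r:{t..a}. {0..t}) (\<lambda>(r, s). K s r)"
    using t by (auto intro!: K_swap)
  have mild_lower: "mild_sol phi D A B L (\<lambda>_. 0) w 0 r (\<lambda>s. K s r)" if "r \<in> {0..t}" for r
    using mild that t by auto
  have mild_upper: "mild_sol phi D A B L (\<lambda>_. 0) w 0 t (\<lambda>s. K s r)" if "r \<in> {t..a}" for r
    using mild_sol_restrict[OF mild] that t by auto
  note lower = integral_of_mild_solutions[where \<alpha>="\<lambda>_. 0" and \<beta>="\<lambda>r. r",
      OF continuous_on_const continuous_on_id _ K_lower mild_lower]
  note upper = integral_of_mild_solutions[where \<alpha>="\<lambda>_. 0" and \<beta>="\<lambda>_. t",
      OF continuous_on_const continuous_on_const _ K_upper mild_upper]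
  have "integral {0..a} (K 0) = integral {0..t} (K 0) + integral {t..a} (K 0)"
    using t by (intro Henstock_Kurzweil_Integration.integral_combine[symmetric] integrable_continuous_interval
        continuous_on_slice[OF K]) auto
  then show "integral {0..t} (\<lambda>s. B (phi s w) (integral {s..a} (K s))) \<in> D"
    and "A (integral {0..t} (\<lambda>s. B (phi s w) (integral {s..a} (K s))))
       = integral {0..t} (\<lambda>r. K r r) + integral {t..a} (K t) - integral {0..a} (K 0)
         - integral {0..t} (\<lambda>s. L (phi s w) (integral {s..a} (K s)))"
    unfolding integral_blinfun_upper_triangle[OF B_cont K t] integral_blinfun_upper_triangle[OF L_cont K t]
    using lower upper t A(1) A(2)[OF lower(1) upper(1)] by (auto simp: subspace_add)
qed

lemma mild_sol_Duhamel_forward: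
  fixes K :: "real \<Rightarrow> real \<Rightarrow> 'z"
  assumes K: "continuous_on (SIGMA s:{0..a}. {0..s}) (\<lambda>(s, r). K s r)" and h: "continuous_on {0..a} h"
    and mild: "\<And>r. r \<in> {0..a} \<Longrightarrow> mild_sol phi D A B L (\<lambda>_. 0) w r a (\<lambda>s. K s r)"
    and diag: "\<And>r. r \<in> {0..a} \<Longrightarrow> K r r = h r"
  shows "mild_sol phi D A B L h w 0 a (\<lambda>t. integral {0..t} (K t))"
  unfolding mild_sol_def
proof (intro conjI ballI)
  show F: "continuous_on {0..a} (\<lambda>t. integral {0..t} (K t))"
    by (rule continuous_on_integral_between[OF continuous_on_const continuous_on_id _ K]) auto
  fix t assume t: "t \<in> {0..a}"
  have "integral {0..t} (\<lambda>r. K r r) = integral {0..t} h"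
    using diag t by (intro integral_cong) auto
  moreover have "integral {0..t} (\<lambda>s. L (phi s w) (integral {0..s} (K s)) + h s)
      = integral {0..t} (\<lambda>s. L (phi s w) (integral {0..s} (K s))) + integral {0..t} h"
    using continuous_on_subset[OF F] continuous_on_subset[OF h] t
    by (intro integral_add integrable_continuous_interval
        continuous_on_blinfun_along_semiflow[OF semiflow L_cont continuous_on_id]) auto
  ultimately show "integral {0..t} (\<lambda>s. B (phi s w) (integral {0..s} (K s))) \<in> D"
    and "integral {0..t} (K t) = integral {0..0} (K 0)
         + A (integral {0..t} (\<lambda>s. B (phi s w) (integral {0..s} (K s))))
         + integral {0..t} (\<lambda>s. L (phi s w) (integral {0..s} (K s)) + h s)"
    using integral_of_mild_solutions_lower_triangle[OF K mild t] by auto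
qed

lemma mild_sol_Duhamel_backward:
  fixes K :: "real \<Rightarrow> real \<Rightarrow> 'z"
  assumes K: "continuous_on (SIGMA s:{0..a}. {s..a}) (\<lambda>(s, r). K s r)" and h: "continuous_on {0..a} h"
    and mild: "\<And>r. r \<in> {0..a} \<Longrightarrow> mild_sol phi D A B L (\<lambda>_. 0) w 0 r (\<lambda>s. K s r)"
    and diag: "\<And>r. r \<in> {0..a} \<Longrightarrow> K r r = h r"
  shows "mild_sol phi D A B L h w 0 a (\<lambda>t. - integral {t..a} (K t))"
  unfolding mild_sol_def
proof (intro conjI ballI)
  note A = closed_linear_operatorD[OF closed_A]
  show Y: "continuous_on {0..a} (\<lambda>t. - integral {t..a} (K t))"
    by (intro continuous_on_minus continuous_on_integral_between[OF continuous_on_id continuous_on_const _ K])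
      auto
  fix t assume t: "t \<in> {0..a}"
  note superpose = integral_of_mild_solutions_upper_triangle[OF K mild t]
  have "integral {0..t} (\<lambda>r. K r r) = integral {0..t} h"
    using diag t by (intro integral_cong) auto
  moreover have "integral {0..t} (\<lambda>s. L (phi s w) (- integral {s..a} (K s)) + h s)
      = integral {0..t} (\<lambda>s. L (phi s w) (- integral {s..a} (K s))) + integral {0..t} h"
    using continuous_on_subset[OF Y] continuous_on_subset[OF h] t
    by (intro integral_add integrable_continuous_interval
        continuous_on_blinfun_along_semiflow[OF semiflow L_cont continuous_on_id]) auto
  moreover have "A (- x) = - A x" if "x \<in> D" for x
    using A(3)[OF that, of "-1"] by simp
  ultimately show "integral {0..t} (\<lambda>s. B (phi s w) (- integral {s..a} (K s))) \<in> D"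
    and "- integral {t..a} (K t) = - integral {0..a} (K 0)
         + A (integral {0..t} (\<lambda>s. B (phi s w) (- integral {s..a} (K s))))
         + integral {0..t} (\<lambda>s. L (phi s w) (- integral {s..a} (K s)) + h s)"
    using superpose A(1) by (simp_all add: blinfun.minus_right subspace_neg)
qed

section \<open>Variation of constants\<close>

lemma C0_linear_cocycle_variation_of_constants:
  assumes T0: "C0_linear_cocycle phi D A B L T0" and g: "continuous_on {0..a} g"
    and z: "mild_sol phi D A B L g w 0 a z" and t: "t \<in> {0..a}"
  shows "z t = T0 t w (z 0) + integral {0..t} (\<lambda>s. T0 (t - s) (phi s w) (g s))"
proof -
  define K where "K s r = T0 (s - r) (phi r w) (g r)" for s r
  have K: "continuous_on (SIGMA s:{0..a}. {0..s}) (\<lambda>(s, r). K s r)"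
    unfolding K_def by (rule continuous_on_forward_kernel[OF semiflow C0_linear_cocycleD(2)[OF T0] g]) auto
  have mild_K: "mild_sol phi D A B L (\<lambda>_. 0) w r a (\<lambda>s. K s r)" if "r \<in> {0..a}" for r
    using mild_sol_shift[OF _ C0_linear_cocycleD(3)[OF T0, of "a - r" "phi r w" "g r"]] that
    by (simp add: K_def)
  have F: "mild_sol phi D A B L g w 0 a (\<lambda>t. integral {0..t} (K t))"
  proof (rule mild_sol_Duhamel_forward[OF K g mild_K])
    fix r show "K r r = g r" using C0_linear_cocycleD(1)[OF T0, of "phi r w"] by (simp add: K_def)
  qed
  have "mild_sol phi D A B L (\<lambda>s. g s + (-1) *\<^sub>R g s) w 0 a (\<lambda>s. z s + (-1) *\<^sub>R integral {0..s} (K s))"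
    by (rule mild_sol_lincomb[OF order_refl g g z F])
  then have "mild_sol phi D A B L (\<lambda>_. 0) w 0 a (\<lambda>s. z s - integral {0..s} (K s))"
    by simp
  from C0_linear_cocycleD(4)[OF T0 _ this t] t show ?thesis
    by (simp add: K_def[abs_def] diff_eq_eq)
qed

lemma continuous_on_projection_along_semiflow:
  assumes C: "C0_cocycle_correspondence phi D A B L P T1 Sb" and g: "continuous_on {0..a} g"
  shows "continuous_on {0..a} (\<lambda>s. P (phi s w) (g s))"
  by (rule continuous_on_blinfun_along_semiflow[OF semiflow C0_cocycle_correspondenceD(2)[OF C]
        continuous_on_id _ g]) auto

lemma C0_cocycle_correspondence_forward_kernel:
  assumes C: "C0_cocycle_correspondence phi D A B L P T1 Sb" and g: "continuous_on {0..a} g"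
  shows "continuous_on (SIGMA t:{0..a}. {0..t}) (\<lambda>(t, s). T1 (t - s) (phi s w) (P (phi s w) (g s)))"
  by (rule continuous_on_forward_kernel[OF semiflow C0_cocycle_correspondenceD(6)[OF C]
        continuous_on_projection_along_semiflow[OF C g]]) auto

lemma C0_cocycle_correspondence_backward_kernel:
  assumes C: "C0_cocycle_correspondence phi D A B L P T1 Sb" and g: "continuous_on {0..a} g"
  shows "continuous_on (SIGMA t:{0..a}. {t..a}) (\<lambda>(t, s). Sb (s - t) (phi t w) (g s - P (phi s w) (g s)))"
proof (rule continuous_on_backward_kernel[OF semiflow C0_cocycle_correspondenceD(10)[OF C]
      continuous_on_diff[OF g continuous_on_projection_along_semiflow[OF C g]]])
  fix s t :: real assume "0 \<le> t" "t \<le> s"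
  then have "phi (s - t) (phi t w) = phi s w"
    using semiflow_add[OF semiflow, of "s - t" t w] by simp
  then show "(s - t, phi t w, g s - P (phi s w) (g s))
      \<in> {(t, w, y). 0 \<le> t \<and> y \<in> range (\<lambda>z. z - P (phi t w) z)}"
    using \<open>t \<le> s\<close> rangeI[of "\<lambda>z. z - P (phi s w) z" "g s"] by simp
qed

lemma C0_cocycle_correspondence_forward_Duhamel:
  assumes C: "C0_cocycle_correspondence phi D A B L P T1 Sb" and g: "continuous_on {0..a} g"
  shows "mild_sol phi D A B L (\<lambda>s. P (phi s w) (g s)) w 0 a
           (\<lambda>t. integral {0..t} (\<lambda>s. T1 (t - s) (phi s w) (P (phi s w) (g s))))"
proof (rule mild_sol_Duhamel_forward[OF C0_cocycle_correspondence_forward_kernel[OF C g]])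
  show "continuous_on {0..a} (\<lambda>s. P (phi s w) (g s))"
    by (rule continuous_on_projection_along_semiflow[OF C g])
  fix r assume r: "r \<in> {0..a}"
  show "T1 (r - r) (phi r w) (P (phi r w) (g r)) = P (phi r w) (g r)"
    by (simp add: C0_cocycle_correspondenceD(5)[OF C])
  have "mild_sol phi D A B L (\<lambda>_. 0) w r a
      (\<lambda>t. T1 (t - r) (phi r w) (P (phi r w) (g r)) + Sb (a - t) (phi t w) (0 - P (phi a w) 0))"
    using r by (intro C0_cocycle_correspondence_boundary_value[OF C]) auto
  then show "mild_sol phi D A B L (\<lambda>_. 0) w r a (\<lambda>t. T1 (t - r) (phi r w) (P (phi r w) (g r)))"
    by (rule mild_sol_cong) (simp add: C0_cocycle_correspondence_zero[OF C])
qed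

lemma C0_cocycle_correspondence_backward_Duhamel:
  assumes C: "C0_cocycle_correspondence phi D A B L P T1 Sb" and g: "continuous_on {0..a} g"
  shows "mild_sol phi D A B L (\<lambda>s. g s - P (phi s w) (g s)) w 0 a
           (\<lambda>t. - integral {t..a} (\<lambda>s. Sb (s - t) (phi t w) (g s - P (phi s w) (g s))))"
proof (rule mild_sol_Duhamel_backward[OF C0_cocycle_correspondence_backward_kernel[OF C g]])
  show "continuous_on {0..a} (\<lambda>s. g s - P (phi s w) (g s))"
    by (rule continuous_on_diff[OF g continuous_on_projection_along_semiflow[OF C g]])
  fix r assume r: "r \<in> {0..a}"
  show "Sb (r - r) (phi r w) (g r - P (phi r w) (g r)) = g r - P (phi r w) (g r)"
    by (simp add: C0_cocycle_correspondenceD(9)[OF C])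
  have "mild_sol phi D A B L (\<lambda>_. 0) w 0 r
      (\<lambda>t. T1 (t - 0) (phi 0 w) (P (phi 0 w) 0) + Sb (r - t) (phi t w) (g r - P (phi r w) (g r)))"
    using r by (intro C0_cocycle_correspondence_boundary_value[OF C]) auto
  then show "mild_sol phi D A B L (\<lambda>_. 0) w 0 r (\<lambda>t. Sb (r - t) (phi t w) (g r - P (phi r w) (g r)))"
    by (rule mild_sol_cong) (simp add: C0_cocycle_correspondence_zero[OF C])
qed

lemma C0_cocycle_correspondence_forward_integral_projection:
  assumes C: "C0_cocycle_correspondence phi D A B L P T1 Sb" and g: "continuous_on {0..a} g"
    and t: "t \<in> {0..a}"
  shows "P (phi t w) (integral {0..t} (\<lambda>s. T1 (t - s) (phi s w) (P (phi s w) (g s))))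
       = integral {0..t} (\<lambda>s. T1 (t - s) (phi s w) (P (phi s w) (g s)))"
proof -
  have "(\<lambda>s. T1 (t - s) (phi s w) (P (phi s w) (g s))) integrable_on {0..t}"
    using t by (intro integrable_continuous_interval
        continuous_on_slice[OF C0_cocycle_correspondence_forward_kernel[OF C g]]) auto
  then have "P (phi t w) (integral {0..t} (\<lambda>s. T1 (t - s) (phi s w) (P (phi s w) (g s))))
      = integral {0..t} (\<lambda>s. P (phi t w) (T1 (t - s) (phi s w) (P (phi s w) (g s))))"
    by (rule integral_blinfun_apply[symmetric])
  also have "\<dots> = integral {0..t} (\<lambda>s. T1 (t - s) (phi s w) (P (phi s w) (g s)))"
  proof (rule integral_cong)
    fix s assume "s \<in> {0..t}"
    then show "P (phi t w) (T1 (t - s) (phi s w) (P (phi s w) (g s))) = T1 (t - s) (phi s w) (P (phi s w) (g s))"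
      using C0_cocycle_correspondence_projections(1)[OF C, of "t - s" "phi s w"]
        semiflow_add[OF semiflow, of "t - s" s w] by simp
  qed
  finally show ?thesis .
qed

lemma C0_cocycle_correspondence_backward_integral_projection:
  assumes C: "C0_cocycle_correspondence phi D A B L P T1 Sb" and g: "continuous_on {0..a} g"
    and t: "t \<in> {0..a}"
  shows "P (phi t w) (integral {t..a} (\<lambda>s. Sb (s - t) (phi t w) (g s - P (phi s w) (g s)))) = 0"
proof -
  have "(\<lambda>s. Sb (s - t) (phi t w) (g s - P (phi s w) (g s))) integrable_on {t..a}"
    using t by (intro integrable_continuous_interval
        continuous_on_slice[OF C0_cocycle_correspondence_backward_kernel[OF C g]]) auto
  then have "P (phi t w) (integral {t..a} (\<lambda>s. Sb (s - t) (phi t w) (g s - P (phi s w) (g s))))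
      = integral {t..a} (\<lambda>s. P (phi t w) (Sb (s - t) (phi t w) (g s - P (phi s w) (g s))))"
    by (rule integral_blinfun_apply[symmetric])
  also have "\<dots> = integral {t..a} (\<lambda>s. 0)"
  proof (rule integral_cong)
    fix s assume "s \<in> {t..a}"
    then show "P (phi t w) (Sb (s - t) (phi t w) (g s - P (phi s w) (g s))) = 0"
      using C0_cocycle_correspondence_projections(2)[OF C, of "s - t" "phi t w"]
        semiflow_add[OF semiflow, of "s - t" t w] t by simp
  qed
  finally show ?thesis by simp
qed

lemma C0_cocycle_correspondence_homogeneous_part:
  assumes C: "C0_cocycle_correspondence phi D A B L P T1 Sb" and g: "continuous_on {0..a} g"
    and z: "mild_sol phi D A B L g w 0 a z"
  shows "mild_sol phi D A B L (\<lambda>_. 0) w 0 a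
           (\<lambda>t. z t - (integral {0..t} (\<lambda>s. T1 (t - s) (phi s w) (P (phi s w) (g s)))
                       - integral {t..a} (\<lambda>s. Sb (s - t) (phi t w) (g s - P (phi s w) (g s)))))"
proof -
  note Pg = continuous_on_projection_along_semiflow[OF C g]
  have "mild_sol phi D A B L (\<lambda>s. P (phi s w) (g s) + 1 *\<^sub>R (g s - P (phi s w) (g s))) w 0 a
      (\<lambda>t. integral {0..t} (\<lambda>s. T1 (t - s) (phi s w) (P (phi s w) (g s)))
           + 1 *\<^sub>R - integral {t..a} (\<lambda>s. Sb (s - t) (phi t w) (g s - P (phi s w) (g s))))"
    using Pg g by (intro mild_sol_lincomb C0_cocycle_correspondence_forward_Duhamel[OF C g]
        C0_cocycle_correspondence_backward_Duhamel[OF C g] continuous_on_diff) auto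
  then have "mild_sol phi D A B L g w 0 a
      (\<lambda>t. integral {0..t} (\<lambda>s. T1 (t - s) (phi s w) (P (phi s w) (g s)))
           - integral {t..a} (\<lambda>s. Sb (s - t) (phi t w) (g s - P (phi s w) (g s))))"
    by simp
  from mild_sol_lincomb[OF order_refl g g z this, of "-1"] show ?thesis
    by (simp add: algebra_simps)
qed

lemma C0_cocycle_correspondence_variation_of_constants:
  assumes C: "C0_cocycle_correspondence phi D A B L P T1 Sb" and g: "continuous_on {0..a} g"
    and z: "mild_sol phi D A B L g w 0 a z" and t: "t \<in> {0..a}"
  shows "P (phi t w) (z t) = T1 t w (P w (z 0))
           + integral {0..t} (\<lambda>s. T1 (t - s) (phi s w) (P (phi s w) (g s)))"
    and "z t - P (phi t w) (z t) = Sb (a - t) (phi t w) (z a - P (phi a w) (z a))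
           - integral {t..a} (\<lambda>s. Sb (s - t) (phi t w) (g s - P (phi s w) (g s)))"
proof -
  define X where "X t = integral {0..t} (\<lambda>s. T1 (t - s) (phi s w) (P (phi s w) (g s)))" for t
  define Y where "Y t = integral {t..a} (\<lambda>s. Sb (s - t) (phi t w) (g s - P (phi s w) (g s)))" for t
  have PX: "P (phi s w) (X s) = X s" and PY: "P (phi s w) (Y s) = 0" if "s \<in> {0..a}" for s
    unfolding X_def Y_def using that C0_cocycle_correspondence_forward_integral_projection[OF C g]
      C0_cocycle_correspondence_backward_integral_projection[OF C g] by simp_all
  have a: "0 \<in> {0..a}" "a \<in> {0..a}" using t by auto
  have "z t - (X t - Y t) = T1 t w (P w (z 0 - (X 0 - Y 0)))
      + Sb (a - t) (phi t w) (z a - (X a - Y a) - P (phi a w) (z a - (X a - Y a)))"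
    using C0_cocycle_correspondence_unique[OF C order_refl _
        C0_cocycle_correspondence_homogeneous_part[OF C g z, folded X_def Y_def] t] t
    by (simp add: semiflow_0[OF semiflow])
  also have "P w (z 0 - (X 0 - Y 0)) = P w (z 0)"
    using PY[OF a(1)] by (simp add: X_def semiflow_0[OF semiflow] blinfun.diff_right blinfun.add_right)
  also have "z a - (X a - Y a) - P (phi a w) (z a - (X a - Y a)) = z a - P (phi a w) (z a)"
    using PX[OF a(2)] by (simp add: Y_def blinfun.diff_right)
  finally have z_t:
    "z t - (X t - Y t) = T1 t w (P w (z 0)) + Sb (a - t) (phi t w) (z a - P (phi a w) (z a))" .
  have "P (phi t w) (T1 t w (P w (z 0))) = T1 t w (P w (z 0))"
    and "P (phi t w) (Sb (a - t) (phi t w) (z a - P (phi a w) (z a))) = 0"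
    using C0_cocycle_correspondence_projections[OF C, of t w]
      C0_cocycle_correspondence_projections(2)[OF C, of "a - t" "phi t w"]
      semiflow_add[OF semiflow, of "a - t" t w] t by auto
  then have "P (phi t w) (z t) - X t = T1 t w (P w (z 0))"
    using arg_cong[OF z_t, of "P (phi t w)"] PX[OF t] PY[OF t]
    by (simp add: blinfun.diff_right blinfun.add_right)
  then show "P (phi t w) (z t) = T1 t w (P w (z 0))
           + integral {0..t} (\<lambda>s. T1 (t - s) (phi s w) (P (phi s w) (g s)))"
    by (simp add: X_def algebra_simps)
  with z_t show "z t - P (phi t w) (z t) = Sb (a - t) (phi t w) (z a - P (phi a w) (z a))
           - integral {t..a} (\<lambda>s. Sb (s - t) (phi t w) (g s - P (phi s w) (g s)))"
    by (simp add: X_def Y_def algebra_simps)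
qed

end

theorem lemma3p27:
  fixes phi :: "real \<Rightarrow> 'm::t2_space \<Rightarrow> 'm"
    and D :: "'z::banach set" and A :: "'z \<Rightarrow> 'z"
    and B L :: "'m \<Rightarrow> ('z \<Rightarrow>\<^sub>L 'z)"
    and g :: "real \<Rightarrow> 'z"
  assumes "semiflow phi"
    and "closed_linear_operator D A"
    and "admissible_coeff phi B"
    and "admissible_coeff phi L"
    and "continuous_on UNIV g"
  shows "(\<forall>T0. C0_linear_cocycle phi D A B L T0 \<longrightarrow>
            (\<forall>w a z. a \<ge> 0 \<longrightarrow> mild_sol phi D A B L g w 0 a z \<longrightarrow>
               (\<forall>t\<in>{0..a}. z t = T0 t w (z 0)
                   + integral {0..t} (\<lambda>s. T0 (t - s) (phi s w) (g s)))))
       \<and> (\<forall>P T1 Sb. C0_cocycle_correspondence phi D A B L P T1 Sb \<longrightarrow>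
            (\<forall>w a z. a \<ge> 0 \<longrightarrow> mild_sol phi D A B L g w 0 a z \<longrightarrow>
               (\<forall>t\<in>{0..a}.
                  P (phi t w) (z t) = T1 t w (P w (z 0))
                     + integral {0..t} (\<lambda>s. T1 (t - s) (phi s w) (P (phi s w) (g s)))
                \<and> z t - P (phi t w) (z t) =
                     Sb (a - t) (phi t w) (z a - P (phi a w) (z a))
                     - integral {t..a} (\<lambda>s. Sb (s - t) (phi t w) (g s - P (phi s w) (g s))))))"
proof -
  have B: "continuous_on UNIV (\<lambda>(w, z). blinfun_apply (B w) z)"
    and L: "continuous_on UNIV (\<lambda>(w, z). blinfun_apply (L w) z)"
    using assms(3,4) unfolding admissible_coeff_def by blast+
  have g: "continuous_on {0..a} g" for a
    using continuous_on_subset[OF assms(5)] by blast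
  show ?thesis
    using C0_linear_cocycle_variation_of_constants[OF assms(1,2) B L _ g]
      C0_cocycle_correspondence_variation_of_constants[OF assms(1,2) B L _ g]
    by blast
qed

end
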